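(* Let $\beta\in\mathbb{N}=\{0,1,2,\dots\}$ and $\alpha\in\mathbb{D}\setminus\{0\}$. Let $\phi_\alpha(z)=\dfrac{\alpha-z}{1-\overline{\alpha}z}$ and, for each non-negative integer $n$, let $v_n:=C_{\phi_\alpha}^*z^n$, where $C_{\phi_\alpha}f=f\circ\phi_\alpha$ acts on $A^2_\beta$ and $^*$ denotes the adjoint in $A^2_\beta$. Then $\langle v_n,v_m\rangle=0$ whenever $|n-m|\ge\beta+3$.
   Context: $\mathbb{D}$ is the open unit disc. For $\beta>-1$, $A^2_\beta$ is the Hilbert space of analytic functions $f(z)=\sum_{n\ge0}\widehat f(n)z^n$ on $\mathbb{D}$ with inner product $\langle f,g\rangle=\sum_{n\ge0}\frac{n!\,\Gamma(2+\beta)}{\Gamma(n+2+\beta)}\widehat f(n)\overline{\widehat g(n)}$ (equivalently the $L^2$ inner product with respect to $(\beta+1)(1-|z|^2)^\beta dA(z)$). *)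

theory Defs
  imports "HOL-Complex_Analysis.Complex_Analysis"
begin

text \<open>Elements of the weighted Bergman space A^2_beta are represented by their
Taylor coefficient sequences.\<close>

definition bergman_weight :: "real \<Rightarrow> nat \<Rightarrow> real" where
  "bergman_weight \<beta> n = fact n * Gamma (2 + \<beta>) / Gamma (real n + 2 + \<beta>)"

definition A2 :: "real \<Rightarrow> (nat \<Rightarrow> complex) set" where
  "A2 \<beta> = {a. summable (\<lambda>n. bergman_weight \<beta> n * (cmod (a n))\<^sup>2)}"

definition A2_inner :: "real \<Rightarrow> (nat \<Rightarrow> complex) \<Rightarrow> (nat \<Rightarrow> complex) \<Rightarrow> complex" where
  "A2_inner \<beta> a b = (\<Sum>n. complex_of_real (bergman_weight \<beta> n) * a n * cnj (b n))"

definition fun_of :: "(nat \<Rightarrow> complex) \<Rightarrow> complex \<Rightarrow> complex" where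
  "fun_of a z = (\<Sum>k. a k * z ^ k)"

definition taylor_coeff :: "(complex \<Rightarrow> complex) \<Rightarrow> nat \<Rightarrow> complex" where
  "taylor_coeff f n = (deriv ^^ n) f 0 / fact n"

definition moebius :: "complex \<Rightarrow> complex \<Rightarrow> complex" where
  "moebius \<alpha> z = (\<alpha> - z) / (1 - cnj \<alpha> * z)"

definition comp_op :: "(complex \<Rightarrow> complex) \<Rightarrow> (nat \<Rightarrow> complex) \<Rightarrow> (nat \<Rightarrow> complex)" where
  "comp_op \<phi> a = taylor_coeff (\<lambda>z. fun_of a (\<phi> z))"

definition monomial :: "nat \<Rightarrow> nat \<Rightarrow> complex" where
  "monomial n = (\<lambda>k. if k = n then 1 else 0)"

definition comp_adj :: "real \<Rightarrow> (complex \<Rightarrow> complex) \<Rightarrow> (nat \<Rightarrow> complex) \<Rightarrow> (nat \<Rightarrow> complex)" where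
  "comp_adj \<beta> \<phi> g = (THE v. v \<in> A2 \<beta> \<and>
      (\<forall>f\<in>A2 \<beta>. A2_inner \<beta> (comp_op \<phi> f) g = A2_inner \<beta> f v))"

end

theory Submission
  imports Defs
begin

text \<open>
  For a holomorphic self-map \<phi> of the disc, the adjoint of the composition operator can be
  written down on monomials: the k-th coefficient of v_n = C_\<phi>* z^n is w_n / w_k times the
  conjugate of the n-th Taylor coefficient of \<phi>^k, where w_k are the weights of A^2_\<beta>;
  Cauchy estimates put this sequence into A^2_\<beta>. Hence <v_n, v_m> = <C_\<phi> v_n, z^m> is w_m
  times the m-th Taylor coefficient of v_n \<circ> \<phi>, and the reproducing kernel
  K_z(w) = (1 - conj z w)^-(\<beta>+2) gives v_n(z) = w_n conj ([t^n] K_z(\<phi> t)).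
  For the Moebius map, K_(\<phi> u)(\<phi> t) = c(u) (1 - conj \<alpha> t)^(\<beta>+2) K_u(t) with conj c(u)
  a multiple of (1 - conj \<alpha> u)^(\<beta>+2), and the n-th Taylor coefficient of
  (1 - conj \<alpha> t)^(\<beta>+2) K_u(t) is a polynomial of degree at most n in conj u; so v_n \<circ> \<phi>
  is a polynomial of degree at most n + \<beta> + 2. This settles m > n + \<beta> + 2, and conjugate symmetry the case n > m + \<beta> + 2.
\<close>

section \<open>Weights and reproducing kernel\<close>

definition kernel_coeff :: "nat \<Rightarrow> nat \<Rightarrow> real" where
  "kernel_coeff b k = real ((k + b + 1) choose k)"

lemma kernel_coeff_pos: "kernel_coeff b k > 0"
  unfolding kernel_coeff_def by simp

lemma bergman_weight_eq_inverse_kernel_coeff: "bergman_weight (real b) k = 1 / kernel_coeff b k"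
proof -
  have "Gamma (2 + real b) = fact (b + 1)" "Gamma (real k + 2 + real b) = fact (k + b + 1)"
    using Gamma_fact[of "b + 1"] Gamma_fact[of "k + b + 1"] by (simp_all add: add_ac)
  moreover have "kernel_coeff b k = fact (k + b + 1) / (fact k * fact (b + 1))"
    unfolding kernel_coeff_def by (subst binomial_fact) auto
  ultimately show ?thesis
    unfolding bergman_weight_def by (simp add: field_simps)
qed

lemma bergman_weight_pos: "bergman_weight (real b) k > 0"
  using kernel_coeff_pos[of b k] by (simp add: bergman_weight_eq_inverse_kernel_coeff)

lemma sums_kernel_coeff:
  fixes x :: complex
  assumes "norm x < 1"
  shows "(\<lambda>k. of_real (kernel_coeff b k) * x ^ k) sums inverse ((1 - x) ^ (b + 2))"
proof -
  have "(- 1) ^ k * ((of_nat (b + 2) + of_nat k - 1) gchoose k) * (- x) ^ k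
      = of_real (kernel_coeff b k) * x ^ k" for k
  proof -
    have "(of_nat (b + 2) + of_nat k - 1 :: complex) = of_nat (k + b + 1)" by simp
    then have "(of_nat (b + 2) + of_nat k - 1 :: complex) gchoose k = of_nat ((k + b + 1) choose k)"
      by (simp only: binomial_gbinomial)
    then show ?thesis
      unfolding kernel_coeff_def by (simp add: power_minus')
  qed
  moreover have "(1 + - x) powr - of_nat (b + 2) = inverse ((1 - x) ^ (b + 2))"
  proof -
    have "1 - x \<noteq> 0" using assms by auto
    have "(1 + - x) powr - of_nat (b + 2) = inverse ((1 - x) powr of_nat (b + 2))"
      by (simp only: powr_minus diff_conv_add_uminus)
    also have "\<dots> = inverse ((1 - x) ^ (b + 2))"
      using \<open>1 - x \<noteq> 0\<close> by (subst powr_nat') auto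
    finally show ?thesis .
  qed
  ultimately show ?thesis
    using one_plus_neg_powr_powser[of "- x" "of_nat (b + 2)"] assms by simp
qed

lemma summable_kernel_coeff:
  assumes "0 \<le> r" "r < 1"
  shows "summable (\<lambda>k. kernel_coeff b k * r ^ k)"
proof -
  have "summable (\<lambda>k. complex_of_real (kernel_coeff b k * r ^ k))"
    using sums_summable[OF sums_kernel_coeff[of "of_real r"]] assms by simp
  then show ?thesis by (simp only: summable_complex_of_real)
qed

lemma mult_le_weighted_sum_squares:
  fixes x y c :: real
  assumes "c > 0"
  shows "x * y \<le> (x\<^sup>2 / c + c * y\<^sup>2) / 2"
proof -
  have "0 \<le> (x - c * y)\<^sup>2 / c"
    using assms by simp
  also have "\<dots> = x\<^sup>2 / c - 2 * x * y + c * y\<^sup>2"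
    using assms by (simp add: field_simps power2_eq_square)
  finally show ?thesis
    by simp
qed

lemma conv_radius_A2:
  assumes "a \<in> A2 (real b)"
  shows "conv_radius a \<ge> 1"
proof (rule conv_radius_geI_ex')
  fix r :: real assume r: "0 < r" "ereal r < 1"
  define M where "M k = (bergman_weight (real b) k * (norm (a k))\<^sup>2 + kernel_coeff b k * (r ^ k)\<^sup>2) / 2" for k
  have "summable (\<lambda>k. kernel_coeff b k * (r ^ k)\<^sup>2)"
  proof -
    have "(r ^ k)\<^sup>2 = (r\<^sup>2) ^ k" for k
      by (metis power_mult mult.commute)
    then show ?thesis
      using summable_kernel_coeff[of "r\<^sup>2" b] r by (simp add: power_less_one_iff abs_square_less_1)
  qed
  then have "summable M"
    using assms unfolding M_def A2_def by (intro summable_divide summable_add) auto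
  moreover have bound: "norm (a k * of_real r ^ k) \<le> M k" for k
  proof -
    have "norm (a k * of_real r ^ k) = norm (a k) * r ^ k"
      using r by (simp add: norm_mult norm_power)
    also have "\<dots> \<le> ((norm (a k))\<^sup>2 / kernel_coeff b k + kernel_coeff b k * (r ^ k)\<^sup>2) / 2"
      using kernel_coeff_pos by (rule mult_le_weighted_sum_squares)
    also have "\<dots> = M k"
      by (simp add: M_def bergman_weight_eq_inverse_kernel_coeff)
    finally show ?thesis .
  qed
  ultimately show "summable (\<lambda>k. a k * of_real r ^ k)"
    by (rule summable_comparison_test')
qed

lemma summable_A2_inner:
  assumes "f \<in> A2 \<beta>" "g \<in> A2 \<beta>" "\<beta> > -1"
  shows "summable (\<lambda>k. of_real (bergman_weight \<beta> k) * f k * cnj (g k))"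
proof -
  define M where "M k = (bergman_weight \<beta> k * (norm (f k))\<^sup>2 + bergman_weight \<beta> k * (norm (g k))\<^sup>2) / 2" for k
  have "summable M"
    using assms(1,2) unfolding M_def A2_def by (intro summable_divide summable_add) auto
  moreover have bound: "norm (of_real (bergman_weight \<beta> k) * f k * cnj (g k)) \<le> M k" for k
  proof -
    have w: "bergman_weight \<beta> k > 0"
      unfolding bergman_weight_def using assms(3) by (intro divide_pos_pos mult_pos_pos Gamma_real_pos) auto
    then have "norm (of_real (bergman_weight \<beta> k) * f k * cnj (g k))
        = bergman_weight \<beta> k * (norm (f k) * norm (g k))"
      by (simp add: norm_mult)
    also have "\<dots> \<le> bergman_weight \<beta> k * (((norm (f k))\<^sup>2 + (norm (g k))\<^sup>2) / 2)"
      using sum_squares_bound[of "norm (f k)" "norm (g k)"] w by (intro mult_left_mono) auto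
    also have "\<dots> = M k"
      by (simp add: M_def distrib_left add_divide_distrib)
    finally show ?thesis .
  qed
  ultimately show ?thesis
    by (rule summable_comparison_test')
qed

lemma A2_inner_commute:
  assumes "f \<in> A2 (real b)" "g \<in> A2 (real b)"
  shows "A2_inner (real b) g f = cnj (A2_inner (real b) f g)"
proof -
  have "(\<lambda>k. of_real (bergman_weight (real b) k) * f k * cnj (g k)) sums A2_inner (real b) f g"
    unfolding A2_inner_def
    using summable_A2_inner[OF assms] by (simp add: summable_sums)
  then have "(\<lambda>k. of_real (bergman_weight (real b) k) * g k * cnj (f k)) sums cnj (A2_inner (real b) f g)"
    by (subst (asm) sums_cnj[symmetric]) (simp add: mult_ac)
  then show ?thesis
    unfolding A2_inner_def by (rule sums_unique[symmetric])
qed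

lemma monomial_in_A2: "monomial n \<in> A2 \<beta>"
proof -
  have "(\<lambda>k. bergman_weight \<beta> k * (norm (monomial n k))\<^sup>2) = (\<lambda>k. if k = n then bergman_weight \<beta> n else 0)"
    by (auto simp: monomial_def)
  then show ?thesis
    unfolding A2_def by simp
qed

lemma A2_inner_monomial_right: "A2_inner \<beta> f (monomial n) = of_real (bergman_weight \<beta> n) * f n"
proof -
  have "(\<lambda>k. of_real (bergman_weight \<beta> k) * f k * cnj (monomial n k))
      = (\<lambda>k. if k = n then of_real (bergman_weight \<beta> n) * f n else 0)"
    by (auto simp: monomial_def)
  then show ?thesis
    unfolding A2_inner_def using sums_single[of n "\<lambda>_. of_real (bergman_weight \<beta> n) * f n"]
    by (simp add: sums_iff)
qed

lemma A2_inner_monomial_left: "A2_inner \<beta> (monomial n) f = of_real (bergman_weight \<beta> n) * cnj (f n)"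
proof -
  have "(\<lambda>k. of_real (bergman_weight \<beta> k) * monomial n k * cnj (f k))
      = (\<lambda>k. if k = n then of_real (bergman_weight \<beta> n) * cnj (f n) else 0)"
    by (auto simp: monomial_def)
  then show ?thesis
    unfolding A2_inner_def using sums_single[of n "\<lambda>_. of_real (bergman_weight \<beta> n) * cnj (f n)"]
    by (simp add: sums_iff)
qed

definition bergman_kernel :: "nat \<Rightarrow> complex \<Rightarrow> nat \<Rightarrow> complex" where
  "bergman_kernel b z = (\<lambda>k. of_real (kernel_coeff b k) * cnj z ^ k)"

lemma fun_of_bergman_kernel:
  assumes "norm (cnj z * w) < 1"
  shows "fun_of (bergman_kernel b z) w = inverse ((1 - cnj z * w) ^ (b + 2))"
  using sums_kernel_coeff[OF assms, of b]
  unfolding fun_of_def bergman_kernel_def by (simp add: sums_iff power_mult_distrib mult.assoc)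

lemma bergman_kernel_in_A2:
  assumes "norm z < 1"
  shows "bergman_kernel b z \<in> A2 (real b)"
proof -
  have "bergman_weight (real b) k * (norm (bergman_kernel b z k))\<^sup>2 = kernel_coeff b k * ((norm z)\<^sup>2) ^ k" for k
    using kernel_coeff_pos[of b k]
    by (simp add: bergman_kernel_def bergman_weight_eq_inverse_kernel_coeff norm_mult norm_power power2_eq_square power_mult_distrib)
  moreover have "summable (\<lambda>k. kernel_coeff b k * ((norm z)\<^sup>2) ^ k)"
    using assms by (intro summable_kernel_coeff) (auto simp: power_less_one_iff abs_square_less_1)
  ultimately show ?thesis
    unfolding A2_def by simp
qed

lemma A2_inner_bergman_kernel: "A2_inner (real b) f (bergman_kernel b z) = fun_of f z"
proof -
  have "of_real (bergman_weight (real b) k) * f k * cnj (bergman_kernel b z k) = f k * z ^ k" for k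
    using kernel_coeff_pos[of b k]
    by (simp add: bergman_kernel_def bergman_weight_eq_inverse_kernel_coeff)
  then show ?thesis
    unfolding A2_inner_def fun_of_def by (rule suminf_cong)
qed

section \<open>Taylor coefficients\<close>

lemma taylor_coeff_eqI:
  assumes "\<epsilon> > 0" and sums: "\<And>t. norm t < \<epsilon> \<Longrightarrow> (\<lambda>j. e j * t ^ j) sums g t"
  shows "taylor_coeff g n = e n"
proof -
  have "summable (\<lambda>j. e j * of_real (\<epsilon> / 2) ^ j)"
    using sums[of "of_real (\<epsilon> / 2)"] \<open>\<epsilon> > 0\<close> by (auto simp: sums_iff)
  then have "fps_conv_radius (Abs_fps e) \<ge> \<epsilon> / 2"
    unfolding fps_conv_radius_def using conv_radius_geI \<open>\<epsilon> > 0\<close> by fastforce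
  then have "fps_conv_radius (Abs_fps e) > 0"
    using \<open>\<epsilon> > 0\<close> by (meson ereal_less(2) half_gt_zero order_less_le_trans)
  then have "eval_fps (Abs_fps e) has_fps_expansion Abs_fps e"
    by (rule eval_fps_has_fps_expansion)
  moreover have "eventually (\<lambda>t. t \<in> ball 0 \<epsilon>) (nhds 0)"
    using \<open>\<epsilon> > 0\<close> by (intro eventually_nhds_in_open) auto
  then have "eventually (\<lambda>t. eval_fps (Abs_fps e) t = g t) (nhds 0)"
    by eventually_elim (use sums in \<open>auto simp: eval_fps_def sums_iff\<close>)
  ultimately have "g has_fps_expansion Abs_fps e"
    using has_fps_expansion_cong by blast
  then show ?thesis
    using fps_nth_fps_expansion[of g "Abs_fps e" n] unfolding taylor_coeff_def by simp
qed

lemma sums_poly: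
  fixes t :: complex
  shows "(\<lambda>j. coeff p j * t ^ j) sums poly p t"
  unfolding poly_altdef by (rule sums_finite) (auto simp: coeff_eq_0)

lemma taylor_coeff_poly_eqI:
  assumes "\<epsilon> > 0" and "\<And>t. norm t < \<epsilon> \<Longrightarrow> g t = poly p t"
  shows "taylor_coeff g n = coeff p n"
  using assms sums_poly by (intro taylor_coeff_eqI[OF \<open>\<epsilon> > 0\<close>]) simp

lemma sums_poly_mult:
  fixes s :: "nat \<Rightarrow> complex"
  assumes "summable (\<lambda>j. norm (s j * t ^ j))"
  shows "(\<lambda>j. (\<Sum>i\<le>j. coeff p i * s (j - i)) * t ^ j) sums (poly p t * (\<Sum>j. s j * t ^ j))"
proof -
  have "summable (\<lambda>i. norm (coeff p i * t ^ i))"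
    by (rule summable_finite[of "{..degree p}"]) (auto simp: coeff_eq_0)
  from Cauchy_product_sums[OF this assms]
  have "(\<lambda>j. \<Sum>i\<le>j. coeff p i * t ^ i * (s (j - i) * t ^ (j - i)))
      sums ((\<Sum>i. coeff p i * t ^ i) * (\<Sum>j. s j * t ^ j))" .
  moreover have "(\<Sum>i. coeff p i * t ^ i) = poly p t"
    using sums_poly by (rule sums_unique[symmetric])
  moreover have "(\<Sum>i\<le>j. coeff p i * t ^ i * (s (j - i) * t ^ (j - i)))
      = (\<Sum>i\<le>j. coeff p i * s (j - i)) * t ^ j" for j
    unfolding sum_distrib_right by (intro sum.cong refl) (simp add: mult_ac flip: power_add)
  ultimately show ?thesis by simp
qed

lemma taylor_coeff_cmult:
  assumes "f holomorphic_on S" "open S" "0 \<in> S"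
  shows "taylor_coeff (\<lambda>z. c * f z) n = c * taylor_coeff f n"
  unfolding taylor_coeff_def using higher_deriv_cmult[OF assms(1,3,2)] by simp

lemma taylor_coeff_sum:
  assumes "finite I" "\<And>k. k \<in> I \<Longrightarrow> f k holomorphic_on S" "open S" "0 \<in> S"
  shows "taylor_coeff (\<lambda>z. \<Sum>k\<in>I. f k z) n = (\<Sum>k\<in>I. taylor_coeff (f k) n)"
  using assms(1,2)
proof (induction I rule: finite_induct)
  case empty
  then show ?case by (simp add: taylor_coeff_def)
next
  case (insert k I)
  have "(deriv ^^ n) (\<lambda>z. f k z + (\<Sum>j\<in>I. f j z)) 0
      = (deriv ^^ n) (f k) 0 + (deriv ^^ n) (\<lambda>z. \<Sum>j\<in>I. f j z) 0"
    using insert.prems assms(3,4) by (intro higher_deriv_add holomorphic_intros) auto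
  then show ?case
    using insert by (simp add: taylor_coeff_def add_divide_distrib)
qed

lemma norm_taylor_coeff_le:
  assumes "g holomorphic_on ball 0 R" "0 < r" "r < R"
    and "\<And>z. norm z = r \<Longrightarrow> norm (g z) \<le> B"
  shows "norm (taylor_coeff g n) \<le> B / r ^ n"
proof -
  have "cball 0 r \<subseteq> ball 0 R" using \<open>r < R\<close> by auto
  then have "norm ((deriv ^^ n) g 0) \<le> fact n * B / r ^ n"
    using assms by (intro Cauchy_inequality holomorphic_on_imp_continuous_on) auto
  then show ?thesis
    unfolding taylor_coeff_def by (simp add: norm_divide field_simps)
qed

section \<open>Composition operators of holomorphic self-maps of the disc\<close>

locale disc_self_map =
  fixes \<phi> :: "complex \<Rightarrow> complex"
  assumes holomorphic: "\<phi> holomorphic_on ball 0 1"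
    and maps_disc: "\<And>z. norm z < 1 \<Longrightarrow> norm (\<phi> z) < 1"

definition comp_matrix :: "(complex \<Rightarrow> complex) \<Rightarrow> nat \<Rightarrow> nat \<Rightarrow> complex" where
  "comp_matrix \<phi> n k = taylor_coeff (\<lambda>z. \<phi> z ^ k) n"

context disc_self_map
begin

lemma bounded_on_half_disc:
  obtains \<rho> where "0 \<le> \<rho>" "\<rho> < 1" "\<And>z. norm z \<le> 1 / 2 \<Longrightarrow> norm (\<phi> z) \<le> \<rho>"
proof -
  have "continuous_on (cball 0 (1 / 2)) (\<lambda>z. norm (\<phi> z))"
    by (intro continuous_intros holomorphic_on_imp_continuous_on holomorphic_on_subset[OF holomorphic]) auto
  then obtain z0 where "norm z0 \<le> 1 / 2" "\<And>z. norm z \<le> 1 / 2 \<Longrightarrow> norm (\<phi> z) \<le> norm (\<phi> z0)"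
    using continuous_attains_sup[of "cball 0 (1 / 2)" "\<lambda>z. norm (\<phi> z)"] by auto
  moreover have "norm (\<phi> z0) < 1"
    using \<open>norm z0 \<le> 1 / 2\<close> by (intro maps_disc) simp
  ultimately show ?thesis
    using that[of "norm (\<phi> z0)"] by auto
qed

lemma comp_matrix_bound:
  obtains \<rho> where "0 \<le> \<rho>" "\<rho> < 1" "\<And>n k. norm (comp_matrix \<phi> n k) \<le> \<rho> ^ k * 2 ^ n"
proof -
  obtain \<rho> where \<rho>: "0 \<le> \<rho>" "\<rho> < 1" "\<And>z. norm z \<le> 1 / 2 \<Longrightarrow> norm (\<phi> z) \<le> \<rho>"
    using bounded_on_half_disc by blast
  have "norm (comp_matrix \<phi> n k) \<le> \<rho> ^ k / (1 / 2) ^ n" for n k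
    unfolding comp_matrix_def
    by (rule norm_taylor_coeff_le[of _ 1]) (auto intro!: holomorphic_intros holomorphic power_mono \<rho>(3)
        simp: norm_power)
  then show ?thesis
    using that \<rho>(1,2) by (simp add: power_one_over)
qed

lemma comp_op_sums:
  assumes "conv_radius c \<ge> 1"
  shows "(\<lambda>k. c k * comp_matrix \<phi> n k) sums comp_op \<phi> c n"
proof -
  obtain \<rho> where \<rho>: "0 \<le> \<rho>" "\<rho> < 1" "\<And>z. norm z \<le> 1 / 2 \<Longrightarrow> norm (\<phi> z) \<le> \<rho>"
    using bounded_on_half_disc by blast
  define A :: "complex set" where "A = ball 0 (1 / 2)"
  have holo: "(\<lambda>z. c k * \<phi> z ^ k) holomorphic_on A" for k
    unfolding A_def by (intro holomorphic_intros holomorphic_on_subset[OF holomorphic]) auto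
  have "uniform_limit A (\<lambda>N z. \<Sum>k<N. c k * \<phi> z ^ k) (\<lambda>z. \<Sum>k. c k * \<phi> z ^ k) sequentially"
  proof (rule Weierstrass_m_test)
    show "norm (c k * \<phi> z ^ k) \<le> norm (c k) * \<rho> ^ k" if "z \<in> A" for k z
      using that \<rho>(3)[of z] unfolding A_def
      by (auto simp: norm_mult norm_power intro!: mult_left_mono power_mono)
    have "ereal \<rho> < conv_radius c"
      using order.strict_trans2[of "ereal \<rho>" "ereal 1"] assms \<rho>(2) by (simp add: one_ereal_def)
    then show "summable (\<lambda>k. norm (c k) * \<rho> ^ k)"
      using abs_summable_in_conv_radius[of "of_real \<rho>" c] \<rho>(1) by (simp add: norm_mult norm_power)
  qed
  then have "(\<lambda>N. (deriv ^^ n) (\<lambda>z. \<Sum>k<N. c k * \<phi> z ^ k) 0)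
      \<longlonglongrightarrow> (deriv ^^ n) (\<lambda>z. fun_of c (\<phi> z)) 0"
    unfolding fun_of_def A_def
    by (rule higher_deriv_complex_uniform_limit)
      (use holo in \<open>auto intro!: always_eventually holomorphic_on_sum simp: A_def\<close>)
  then have "(\<lambda>N. taylor_coeff (\<lambda>z. \<Sum>k<N. c k * \<phi> z ^ k) n) \<longlonglongrightarrow> comp_op \<phi> c n"
    unfolding comp_op_def taylor_coeff_def by (intro tendsto_divide tendsto_const) auto
  moreover have "taylor_coeff (\<lambda>z. \<Sum>k<N. c k * \<phi> z ^ k) n = (\<Sum>k<N. c k * comp_matrix \<phi> n k)"
    for N
    unfolding comp_matrix_def using holo
    by (subst taylor_coeff_sum[of _ _ A])
      (auto simp: A_def intro!: sum.cong taylor_coeff_cmult[of _ A] holomorphic_intros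
        holomorphic_on_subset[OF holomorphic])
  ultimately show ?thesis
    unfolding sums_def by simp
qed

end

definition comp_adj_monomial :: "nat \<Rightarrow> (complex \<Rightarrow> complex) \<Rightarrow> nat \<Rightarrow> nat \<Rightarrow> complex" where
  "comp_adj_monomial b \<phi> n k =
     of_real (bergman_weight (real b) n * kernel_coeff b k) * cnj (comp_matrix \<phi> n k)"

context disc_self_map
begin

lemma comp_adj_monomial_in_A2: "comp_adj_monomial b \<phi> n \<in> A2 (real b)"
proof -
  obtain \<rho> where \<rho>: "0 \<le> \<rho>" "\<rho> < 1" "\<And>n k. norm (comp_matrix \<phi> n k) \<le> \<rho> ^ k * 2 ^ n"
    using comp_matrix_bound by blast
  define C where "C = (bergman_weight (real b) n * 2 ^ n)\<^sup>2"
  have bound: "bergman_weight (real b) k * (norm (comp_adj_monomial b \<phi> n k))\<^sup>2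
      \<le> C * (kernel_coeff b k * (\<rho>\<^sup>2) ^ k)" for k
  proof -
    have "norm (comp_adj_monomial b \<phi> n k)
        = bergman_weight (real b) n * kernel_coeff b k * norm (comp_matrix \<phi> n k)"
      using kernel_coeff_pos[of b k] bergman_weight_pos[of b n]
      by (simp add: comp_adj_monomial_def norm_mult)
    then have "bergman_weight (real b) k * (norm (comp_adj_monomial b \<phi> n k))\<^sup>2
        = (bergman_weight (real b) n)\<^sup>2 * kernel_coeff b k * (norm (comp_matrix \<phi> n k))\<^sup>2"
      using kernel_coeff_pos[of b k]
      by (simp add: bergman_weight_eq_inverse_kernel_coeff[of b k] power2_eq_square)
    also have "\<dots> \<le> (bergman_weight (real b) n)\<^sup>2 * kernel_coeff b k * (\<rho> ^ k * 2 ^ n)\<^sup>2"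
      using kernel_coeff_pos[of b k] \<rho>(3)[of n k] by (intro mult_left_mono power_mono) auto
    also have "\<dots> = C * (kernel_coeff b k * (\<rho>\<^sup>2) ^ k)"
      unfolding C_def by (simp add: power_mult_distrib mult_ac flip: power_mult)
    finally show ?thesis .
  qed
  have "summable (\<lambda>k. C * (kernel_coeff b k * (\<rho>\<^sup>2) ^ k))"
    using \<rho>(1,2) by (intro summable_mult summable_kernel_coeff) (auto simp: power_less_one_iff)
  then have "summable (\<lambda>k. bergman_weight (real b) k * (norm (comp_adj_monomial b \<phi> n k))\<^sup>2)"
    by (rule summable_comparison_test'[where N = 0])
      (simp add: abs_mult abs_of_pos bergman_weight_pos bound)
  then show ?thesis
    unfolding A2_def by simp
qed

lemma A2_inner_comp_op_monomial:
  assumes "f \<in> A2 (real b)"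
  shows "A2_inner (real b) (comp_op \<phi> f) (monomial n) = A2_inner (real b) f (comp_adj_monomial b \<phi> n)"
proof -
  have "(\<lambda>k. f k * comp_matrix \<phi> n k) sums comp_op \<phi> f n"
    using conv_radius_A2[OF assms] by (rule comp_op_sums)
  then have "(\<lambda>k. of_real (bergman_weight (real b) n) * (f k * comp_matrix \<phi> n k))
      sums (of_real (bergman_weight (real b) n) * comp_op \<phi> f n)"
    by (rule sums_mult)
  moreover have "A2_inner (real b) f (comp_adj_monomial b \<phi> n)
      = (\<Sum>k. of_real (bergman_weight (real b) n) * (f k * comp_matrix \<phi> n k))"
    unfolding A2_inner_def
  proof (rule suminf_cong)
    show "of_real (bergman_weight (real b) k) * f k * cnj (comp_adj_monomial b \<phi> n k)
        = of_real (bergman_weight (real b) n) * (f k * comp_matrix \<phi> n k)" for k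
      using kernel_coeff_pos[of b k]
      by (simp add: comp_adj_monomial_def bergman_weight_eq_inverse_kernel_coeff)
  qed
  ultimately show ?thesis
    by (simp add: A2_inner_monomial_right sums_iff)
qed

lemma comp_adj_monomial_eq: "comp_adj (real b) \<phi> (monomial n) = comp_adj_monomial b \<phi> n"
  unfolding comp_adj_def
proof (rule the_equality)
  show "comp_adj_monomial b \<phi> n \<in> A2 (real b) \<and> (\<forall>f\<in>A2 (real b).
      A2_inner (real b) (comp_op \<phi> f) (monomial n) = A2_inner (real b) f (comp_adj_monomial b \<phi> n))"
    using comp_adj_monomial_in_A2 A2_inner_comp_op_monomial by blast
  fix v assume v: "v \<in> A2 (real b) \<and> (\<forall>f\<in>A2 (real b).
      A2_inner (real b) (comp_op \<phi> f) (monomial n) = A2_inner (real b) f v)"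
  show "v = comp_adj_monomial b \<phi> n"
  proof
    fix j
    have "A2_inner (real b) (monomial j) v = A2_inner (real b) (monomial j) (comp_adj_monomial b \<phi> n)"
      using v A2_inner_comp_op_monomial[OF monomial_in_A2] monomial_in_A2 by metis
    then show "v j = comp_adj_monomial b \<phi> n j"
      using bergman_weight_pos[of b j] by (simp add: A2_inner_monomial_left)
  qed
qed

lemma A2_inner_comp_adj_monomial:
  "A2_inner (real b) (comp_adj_monomial b \<phi> n) (comp_adj_monomial b \<phi> m)
     = of_real (bergman_weight (real b) m) * comp_op \<phi> (comp_adj_monomial b \<phi> n) m"
  using A2_inner_comp_op_monomial[OF comp_adj_monomial_in_A2, of b n m]
  by (simp add: A2_inner_monomial_right)

lemma fun_of_comp_adj_monomial:
  assumes "norm z < 1"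
  shows "fun_of (comp_adj_monomial b \<phi> n) z
    = of_real (bergman_weight (real b) n) * cnj (comp_op \<phi> (bergman_kernel b z) n)"
proof -
  have "of_real (bergman_weight (real b) n) * comp_op \<phi> (bergman_kernel b z) n
      = A2_inner (real b) (comp_op \<phi> (bergman_kernel b z)) (monomial n)"
    by (simp add: A2_inner_monomial_right)
  also have "\<dots> = A2_inner (real b) (bergman_kernel b z) (comp_adj_monomial b \<phi> n)"
    using bergman_kernel_in_A2[OF assms] by (rule A2_inner_comp_op_monomial)
  also have "\<dots> = cnj (A2_inner (real b) (comp_adj_monomial b \<phi> n) (bergman_kernel b z))"
    using comp_adj_monomial_in_A2 bergman_kernel_in_A2[OF assms] by (rule A2_inner_commute)
  also have "\<dots> = cnj (fun_of (comp_adj_monomial b \<phi> n) z)"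
    by (simp add: A2_inner_bergman_kernel)
  finally show ?thesis
    by (metis complex_cnj_cnj complex_cnj_complex_of_real complex_cnj_mult)
qed

end

section \<open>The Moebius map\<close>

lemma moebius_eq_Moebius_function: "moebius \<alpha> = (\<lambda>z. - Moebius_function 0 \<alpha> z)"
  by (simp add: fun_eq_iff moebius_def Moebius_function_simple minus_divide_left)

lemma disc_self_map_moebius:
  assumes "norm \<alpha> < 1"
  shows "disc_self_map (moebius \<alpha>)"
proof
  show "moebius \<alpha> holomorphic_on ball 0 1"
    unfolding moebius_eq_Moebius_function
    using Moebius_function_holomorphic[OF assms] by (intro holomorphic_intros)
  show "norm (moebius \<alpha> z) < 1" if "norm z < 1" for z
    using Moebius_function_norm_lt_1[OF assms that] by (simp add: moebius_eq_Moebius_function)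
qed

lemma moebius_denominator_nonzero:
  assumes "norm \<alpha> < 1" "norm z < 1"
  shows "1 - cnj \<alpha> * z \<noteq> 0"
  using norm_mult_less[of "cnj \<alpha>" 1 z 1] assms by auto

lemma one_minus_cnj_moebius_mult_moebius:
  assumes u: "1 - \<alpha> * cnj u \<noteq> 0" and t: "1 - cnj \<alpha> * t \<noteq> 0"
  shows "1 - cnj (moebius \<alpha> u) * moebius \<alpha> t =
     (1 - \<alpha> * cnj \<alpha>) * (1 - cnj u * t) / ((1 - \<alpha> * cnj u) * (1 - cnj \<alpha> * t))"
proof -
  have "cnj (moebius \<alpha> u) * moebius \<alpha> t = (cnj \<alpha> - cnj u) * (\<alpha> - t) / ((1 - \<alpha> * cnj u) * (1 - cnj \<alpha> * t))"
    by (simp add: moebius_def)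
  then have "1 - cnj (moebius \<alpha> u) * moebius \<alpha> t
      = ((1 - \<alpha> * cnj u) * (1 - cnj \<alpha> * t) - (cnj \<alpha> - cnj u) * (\<alpha> - t)) / ((1 - \<alpha> * cnj u) * (1 - cnj \<alpha> * t))"
    using u t by (simp add: diff_divide_distrib)
  also have "(1 - \<alpha> * cnj u) * (1 - cnj \<alpha> * t) - (cnj \<alpha> - cnj u) * (\<alpha> - t)
      = (1 - \<alpha> * cnj \<alpha>) * (1 - cnj u * t)"
    by (simp add: algebra_simps)
  finally show ?thesis .
qed

lemma fun_of_bergman_kernel_moebius:
  assumes \<alpha>: "norm \<alpha> < 1" and u: "norm u < 1" and t: "norm t < 1"
  shows "fun_of (bergman_kernel b (moebius \<alpha> u)) (moebius \<alpha> t)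
    = ((1 - \<alpha> * cnj u) / (1 - \<alpha> * cnj \<alpha>)) ^ (b + 2)
      * ((1 - cnj \<alpha> * t) ^ (b + 2) * fun_of (bergman_kernel b u) t)"
proof -
  define k where "k = b + 2"
  define N where "N = 1 - \<alpha> * cnj \<alpha>"
  have nonzero: "N \<noteq> 0" "1 - \<alpha> * cnj u \<noteq> 0" "1 - cnj \<alpha> * t \<noteq> 0"
    using moebius_denominator_nonzero[OF \<alpha> \<alpha>] moebius_denominator_nonzero[OF u \<alpha>]
      moebius_denominator_nonzero[OF \<alpha> t] by (auto simp: N_def mult.commute)
  have ut: "norm (cnj u * t) < 1"
    using norm_mult_less[of "cnj u" 1 t 1] u t by simp
  then have "1 - cnj u * t \<noteq> 0"
    by auto
  have "norm (cnj (moebius \<alpha> u) * moebius \<alpha> t) < 1"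
    using norm_mult_less[of "cnj (moebius \<alpha> u)" 1 "moebius \<alpha> t" 1]
      disc_self_map.maps_disc[OF disc_self_map_moebius[OF \<alpha>]] u t by simp
  then have "fun_of (bergman_kernel b (moebius \<alpha> u)) (moebius \<alpha> t)
      = inverse ((1 - cnj (moebius \<alpha> u) * moebius \<alpha> t) ^ k)"
    unfolding k_def by (rule fun_of_bergman_kernel)
  also have "\<dots> = inverse ((N * (1 - cnj u * t) / ((1 - \<alpha> * cnj u) * (1 - cnj \<alpha> * t))) ^ k)"
    using one_minus_cnj_moebius_mult_moebius[OF nonzero(2,3)] by (simp add: N_def)
  also have "\<dots> = (inverse (N * (1 - cnj u * t) / ((1 - \<alpha> * cnj u) * (1 - cnj \<alpha> * t)))) ^ k"
    by (rule power_inverse[symmetric])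
  also have "\<dots> = ((1 - \<alpha> * cnj u) / N * ((1 - cnj \<alpha> * t) * inverse (1 - cnj u * t))) ^ k"
    by (simp add: divide_inverse inverse_mult_distrib mult_ac)
  also have "\<dots> = ((1 - \<alpha> * cnj u) / N) ^ k * ((1 - cnj \<alpha> * t) ^ k * inverse ((1 - cnj u * t) ^ k))"
    by (simp only: power_mult_distrib power_inverse)
  also have "inverse ((1 - cnj u * t) ^ k) = fun_of (bergman_kernel b u) t"
    using ut unfolding k_def by (rule fun_of_bergman_kernel[symmetric])
  finally show ?thesis
    unfolding k_def N_def .
qed

lemma comp_op_bergman_kernel_moebius:
  assumes \<alpha>: "norm \<alpha> < 1" and u: "norm u < 1"
  shows "comp_op (moebius \<alpha>) (bergman_kernel b (moebius \<alpha> u)) n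
    = ((1 - \<alpha> * cnj u) / (1 - \<alpha> * cnj \<alpha>)) ^ (b + 2)
      * (\<Sum>i\<le>n. coeff ([:1, - cnj \<alpha>:] ^ (b + 2)) i * bergman_kernel b u (n - i))"
  unfolding comp_op_def
proof (rule taylor_coeff_eqI[of 1])
  define k where "k = b + 2"
  define P where "P = [:1, - cnj \<alpha>:] ^ k"
  define C where "C = ((1 - \<alpha> * cnj u) / (1 - \<alpha> * cnj \<alpha>)) ^ k"
  fix t :: complex assume t: "norm t < 1"
  have "summable (\<lambda>j. norm (bergman_kernel b u j * t ^ j))"
    using summable_kernel_coeff[of "norm u * norm t" b] norm_mult_less[of u 1 t 1] u t
    by (simp add: bergman_kernel_def norm_mult norm_power power_mult_distrib abs_of_pos kernel_coeff_pos
        mult.assoc)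
  then have "(\<lambda>j. (\<Sum>i\<le>j. coeff P i * bergman_kernel b u (j - i)) * t ^ j)
      sums (poly P t * fun_of (bergman_kernel b u) t)"
    unfolding fun_of_def by (rule sums_poly_mult)
  then have "(\<lambda>j. C * (\<Sum>i\<le>j. coeff P i * bergman_kernel b u (j - i)) * t ^ j)
      sums (C * (poly P t * fun_of (bergman_kernel b u) t))"
    by (auto dest: sums_mult[of _ _ C] simp: mult.assoc)
  moreover have "poly P t = (1 - cnj \<alpha> * t) ^ k"
    unfolding P_def poly_power by (simp add: mult.commute)
  ultimately show "(\<lambda>j. C * (\<Sum>i\<le>j. coeff P i * bergman_kernel b u (j - i)) * t ^ j)
      sums fun_of (bergman_kernel b (moebius \<alpha> u)) (moebius \<alpha> t)"
    unfolding fun_of_bergman_kernel_moebius[OF \<alpha> u t] C_def k_def by simp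
qed simp

lemma fun_of_comp_adj_monomial_moebius:
  assumes \<alpha>: "norm \<alpha> < 1"
  obtains R where "degree R \<le> n + b + 2"
    and "\<And>u. norm u < 1 \<Longrightarrow> fun_of (comp_adj_monomial b (moebius \<alpha>) n) (moebius \<alpha> u) = poly R u"
proof -
  interpret disc_self_map "moebius \<alpha>"
    by (rule disc_self_map_moebius[OF \<alpha>])
  define k where "k = b + 2"
  define P where "P = [:1, - cnj \<alpha>:] ^ k"
  define Q where "Q = (\<Sum>i\<le>n. monom (cnj (coeff P i) * of_real (kernel_coeff b (n - i))) (n - i))"
  define N where "N = 1 - \<alpha> * cnj \<alpha>"
  define R where "R = smult (of_real (bergman_weight (real b) n) / N ^ k) (P * Q)"
  have "degree P \<le> degree [:1, - cnj \<alpha>:] * k"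
    unfolding P_def by (rule degree_power_le)
  also have "\<dots> \<le> b + 2"
    by (simp add: k_def)
  finally have "degree P \<le> b + 2" .
  moreover have "degree Q \<le> n"
    unfolding Q_def by (intro degree_sum_le) (auto intro: order.trans[OF degree_monom_le])
  ultimately have "degree R \<le> n + b + 2"
    unfolding R_def using degree_smult_le[of _ "P * Q"] degree_mult_le[of P Q] by simp
  moreover have "fun_of (comp_adj_monomial b (moebius \<alpha>) n) (moebius \<alpha> u) = poly R u" if u: "norm u < 1" for u
  proof -
    have "cnj N = N"
      unfolding N_def by simp
    have "fun_of (comp_adj_monomial b (moebius \<alpha>) n) (moebius \<alpha> u)
        = of_real (bergman_weight (real b) n) * cnj (comp_op (moebius \<alpha>) (bergman_kernel b (moebius \<alpha> u)) n)"
      using maps_disc[OF u] by (rule fun_of_comp_adj_monomial)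
    also have "\<dots> = of_real (bergman_weight (real b) n)
        * (cnj (((1 - \<alpha> * cnj u) / N) ^ k) * cnj (\<Sum>i\<le>n. coeff P i * bergman_kernel b u (n - i)))"
      by (simp only: comp_op_bergman_kernel_moebius[OF \<alpha> u, of b n, folded k_def, folded P_def N_def]
          complex_cnj_mult)
    also have "cnj (((1 - \<alpha> * cnj u) / N) ^ k) = poly P u / N ^ k"
      using \<open>cnj N = N\<close> by (simp add: P_def poly_power power_divide mult.commute)
    also have "cnj (\<Sum>i\<le>n. coeff P i * bergman_kernel b u (n - i)) = poly Q u"
      by (simp add: Q_def bergman_kernel_def poly_sum poly_monom mult_ac)
    finally show ?thesis
      by (simp add: R_def)
  qed
  ultimately show ?thesis
    using that by blast
qed

lemma A2_inner_comp_adj_monomial_moebius_eq_0: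
  assumes \<alpha>: "norm \<alpha> < 1" and "n + b + 2 < m"
  shows "A2_inner (real b) (comp_adj_monomial b (moebius \<alpha>) n) (comp_adj_monomial b (moebius \<alpha>) m) = 0"
proof -
  interpret disc_self_map "moebius \<alpha>"
    by (rule disc_self_map_moebius[OF \<alpha>])
  obtain R where "degree R \<le> n + b + 2"
    and R: "\<And>u. norm u < 1 \<Longrightarrow> fun_of (comp_adj_monomial b (moebius \<alpha>) n) (moebius \<alpha> u) = poly R u"
    using fun_of_comp_adj_monomial_moebius[OF \<alpha>] by blast
  have "comp_op (moebius \<alpha>) (comp_adj_monomial b (moebius \<alpha>) n) m = coeff R m"
    unfolding comp_op_def using R by (intro taylor_coeff_poly_eqI[of 1]) auto
  also have "\<dots> = 0"
    using \<open>degree R \<le> n + b + 2\<close> \<open>n + b + 2 < m\<close> by (intro coeff_eq_0) simp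
  finally show ?thesis
    by (simp add: A2_inner_comp_adj_monomial)
qed

theorem lemma5p5:
  fixes \<beta> :: nat and \<alpha> :: complex and n m :: nat
  assumes "\<alpha> \<in> ball 0 1" and "\<alpha> \<noteq> 0"
    and "\<bar>int n - int m\<bar> \<ge> int \<beta> + 3"
  shows "A2_inner (real \<beta>)
           (comp_adj (real \<beta>) (moebius \<alpha>) (monomial n))
           (comp_adj (real \<beta>) (moebius \<alpha>) (monomial m)) = 0"
proof -
  have \<alpha>: "norm \<alpha> < 1"
    using assms(1) by simp
  interpret disc_self_map "moebius \<alpha>"
    by (rule disc_self_map_moebius[OF \<alpha>])
  let ?v = "comp_adj_monomial \<beta> (moebius \<alpha>)"
  consider "n + \<beta> + 2 < m" | "m + \<beta> + 2 < n"
    using assms(3) by linarith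
  then have "A2_inner (real \<beta>) (?v n) (?v m) = 0"
  proof cases
    case 1
    then show ?thesis by (rule A2_inner_comp_adj_monomial_moebius_eq_0[OF \<alpha>])
  next
    case 2
    have "A2_inner (real \<beta>) (?v n) (?v m) = cnj (A2_inner (real \<beta>) (?v m) (?v n))"
      by (rule A2_inner_commute[OF comp_adj_monomial_in_A2 comp_adj_monomial_in_A2])
    also have "A2_inner (real \<beta>) (?v m) (?v n) = 0"
      using 2 by (rule A2_inner_comp_adj_monomial_moebius_eq_0[OF \<alpha>])
    finally show ?thesis
      by simp
  qed
  then show ?thesis
    by (simp add: comp_adj_monomial_eq)
qed

end
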